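(* Let $G$ and $A$ be finite groups with $A$ acting on $G$ by automorphisms, and let $B\leq A$ (acting on $G$ by restriction). (i) If $\Gamma(G,B)$ is connected of diameter $d$, then $\Gamma(G,A)$ is connected of diameter at most $d$. (ii) If $\Gamma(G,B)$ has $m$ connected components, then $\Gamma(G,A)$ has at most $m$ connected components.
   Context: For a finite group $A$ acting by automorphisms on a finite group $G$, the commuting graph of $A$-orbits $\Gamma(G,A)$ is the simple graph whose vertex set is the set $\{x^{A}: x\in G\setminus\{1\}\}$ of $A$-orbits on $G\setminus\{1\}$, two distinct vertices $\mathcal{O},\mathcal{O}'$ being adjacent if and only if there exist $x\in\mathcal{O}$ and $y\in\mathcal{O}'$ with $xy=yx$. *)

theory Defs
  imports "HOL-Algebra.Algebra"
begin

definition acts_by_automorphisms :: "('b, 'c) monoid_scheme \<Rightarrow> ('a, 'd) monoid_scheme \<Rightarrow> ('b \<Rightarrow> 'a \<Rightarrow> 'a) \<Rightarrow> bool" where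
  "acts_by_automorphisms A G \<phi> \<longleftrightarrow>
     group A \<and> group G \<and> group_action A (carrier G) \<phi> \<and> (\<forall>a \<in> carrier A. \<phi> a \<in> auto G)"

definition orbit_graph_vertices :: "('b, 'c) monoid_scheme \<Rightarrow> ('a, 'd) monoid_scheme \<Rightarrow> ('b \<Rightarrow> 'a \<Rightarrow> 'a) \<Rightarrow> 'a set set" where
  "orbit_graph_vertices A G \<phi> = {orbit A \<phi> x | x. x \<in> carrier G - {\<one>\<^bsub>G\<^esub>}}"

definition orbit_graph_adj :: "('a, 'd) monoid_scheme \<Rightarrow> 'a set \<Rightarrow> 'a set \<Rightarrow> bool" where
  "orbit_graph_adj G P Q \<longleftrightarrow> P \<noteq> Q \<and> (\<exists>x \<in> P. \<exists>y \<in> Q. x \<otimes>\<^bsub>G\<^esub> y = y \<otimes>\<^bsub>G\<^esub> x)"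

definition is_walk :: "'v set \<Rightarrow> ('v \<Rightarrow> 'v \<Rightarrow> bool) \<Rightarrow> 'v list \<Rightarrow> bool" where
  "is_walk V E xs \<longleftrightarrow> xs \<noteq> [] \<and> set xs \<subseteq> V \<and> (\<forall>i. Suc i < length xs \<longrightarrow> E (xs ! i) (xs ! Suc i))"

definition walk_of_length :: "'v set \<Rightarrow> ('v \<Rightarrow> 'v \<Rightarrow> bool) \<Rightarrow> nat \<Rightarrow> 'v \<Rightarrow> 'v \<Rightarrow> bool" where
  "walk_of_length V E n u v \<longleftrightarrow> (\<exists>xs. is_walk V E xs \<and> hd xs = u \<and> last xs = v \<and> length xs = Suc n)"

definition reachable :: "'v set \<Rightarrow> ('v \<Rightarrow> 'v \<Rightarrow> bool) \<Rightarrow> 'v \<Rightarrow> 'v \<Rightarrow> bool" where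
  "reachable V E u v \<longleftrightarrow> (\<exists>n. walk_of_length V E n u v)"

definition graph_dist :: "'v set \<Rightarrow> ('v \<Rightarrow> 'v \<Rightarrow> bool) \<Rightarrow> 'v \<Rightarrow> 'v \<Rightarrow> nat" where
  "graph_dist V E u v = (LEAST n. walk_of_length V E n u v)"

definition graph_connected :: "'v set \<Rightarrow> ('v \<Rightarrow> 'v \<Rightarrow> bool) \<Rightarrow> bool" where
  "graph_connected V E \<longleftrightarrow> (\<forall>u \<in> V. \<forall>v \<in> V. reachable V E u v)"

definition graph_diameter :: "'v set \<Rightarrow> ('v \<Rightarrow> 'v \<Rightarrow> bool) \<Rightarrow> nat" where
  "graph_diameter V E = Max {graph_dist V E u v | u v. u \<in> V \<and> v \<in> V}"

definition connected_components :: "'v set \<Rightarrow> ('v \<Rightarrow> 'v \<Rightarrow> bool) \<Rightarrow> 'v set set" where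
  "connected_components V E = V // {(u, v). u \<in> V \<and> v \<in> V \<and> reachable V E u v}"

definition num_components :: "'v set \<Rightarrow> ('v \<Rightarrow> 'v \<Rightarrow> bool) \<Rightarrow> nat" where
  "num_components V E = card (connected_components V E)"

end

theory Submission
  imports Defs
begin

(* Every B-orbit lies in a unique A-orbit, and sending each B-orbit to the A-orbit containing it
   maps the vertices of Gamma(G,B) onto those of Gamma(G,A). Commuting representatives of two
   adjacent B-orbits also lie in the enclosing A-orbits, so adjacent vertices go to adjacent or
   equal ones. Such a surjective weak homomorphism can only shorten walks, so it cannot increase
   distances, the diameter or the number of connected components. *)

lemma is_walk_Cons:
  "is_walk V E (x # xs) \<longleftrightarrow> x \<in> V \<and> (xs = [] \<or> E x (hd xs) \<and> is_walk V E xs)"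
  unfolding is_walk_def
  by (cases xs) (auto simp: nth_Cons less_Suc_eq_0_disj split: nat.splits)

lemma walk_of_length_0_iff: "walk_of_length V E 0 u v \<longleftrightarrow> u \<in> V \<and> u = v"
  unfolding walk_of_length_def
  by (auto simp: length_Suc_conv is_walk_Cons intro!: exI[of _ "[v]"])

lemma walk_of_length_Suc_iff:
  "walk_of_length V E (Suc n) u v \<longleftrightarrow> u \<in> V \<and> (\<exists>w. E u w \<and> walk_of_length V E n w v)"
proof
  assume "walk_of_length V E (Suc n) u v"
  then obtain ys where "is_walk V E (u # ys)" "last (u # ys) = v" "length ys = Suc n"
    unfolding walk_of_length_def by (auto simp: length_Suc_conv)
  then show "u \<in> V \<and> (\<exists>w. E u w \<and> walk_of_length V E n w v)"
    unfolding walk_of_length_def by (auto simp: is_walk_Cons) blast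
next
  assume "u \<in> V \<and> (\<exists>w. E u w \<and> walk_of_length V E n w v)"
  then obtain ys where "u \<in> V" "E u (hd ys)" "is_walk V E ys" "last ys = v" "length ys = Suc n"
    unfolding walk_of_length_def by blast
  then show "walk_of_length V E (Suc n) u v"
    unfolding walk_of_length_def by (intro exI[of _ "u # ys"]) (auto simp: is_walk_Cons)
qed

lemma walk_of_length_in_vertices: "walk_of_length V E n u v \<Longrightarrow> u \<in> V \<and> v \<in> V"
  by (induction n arbitrary: u) (auto simp: walk_of_length_0_iff walk_of_length_Suc_iff)

lemma walk_of_length_trans:
  "walk_of_length V E n u v \<Longrightarrow> walk_of_length V E k v w \<Longrightarrow> walk_of_length V E (n + k) u w"
  by (induction n arbitrary: u) (auto simp: walk_of_length_0_iff walk_of_length_Suc_iff)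

lemma reachable_refl: "u \<in> V \<Longrightarrow> reachable V E u u"
  unfolding reachable_def by (metis walk_of_length_0_iff)

lemma reachable_trans: "reachable V E u v \<Longrightarrow> reachable V E v w \<Longrightarrow> reachable V E u w"
  unfolding reachable_def by (metis walk_of_length_trans)

lemma reachable_in_vertices: "reachable V E u v \<Longrightarrow> u \<in> V \<and> v \<in> V"
  unfolding reachable_def by (elim exE) (rule walk_of_length_in_vertices)

definition surj_weak_graph_hom ::
    "'v set \<Rightarrow> ('v \<Rightarrow> 'v \<Rightarrow> bool) \<Rightarrow> 'w set \<Rightarrow> ('w \<Rightarrow> 'w \<Rightarrow> bool) \<Rightarrow> ('v \<Rightarrow> 'w) \<Rightarrow> bool" where
  "surj_weak_graph_hom V E W F f \<longleftrightarrow>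
     f ` V = W \<and> (\<forall>u \<in> V. \<forall>v \<in> V. E u v \<longrightarrow> f u = f v \<or> F (f u) (f v))"

lemma walk_of_length_surj_weak_graph_hom:
  assumes f: "surj_weak_graph_hom V E W F f"
  shows "walk_of_length V E n u v \<Longrightarrow> \<exists>k \<le> n. walk_of_length W F k (f u) (f v)"
proof (induction n arbitrary: u)
  case 0
  then show ?case using f by (auto simp: walk_of_length_0_iff surj_weak_graph_hom_def)
next
  case (Suc n)
  then obtain w where u: "u \<in> V" and uw: "E u w" and w: "walk_of_length V E n w v"
    by (auto simp: walk_of_length_Suc_iff)
  obtain k where "k \<le> n" and k: "walk_of_length W F k (f w) (f v)"
    using Suc.IH w by blast
  have "f u = f w \<or> F (f u) (f w)" and "f u \<in> W"
    using f u uw conjunct1[OF walk_of_length_in_vertices[OF w]] by (auto simp: surj_weak_graph_hom_def)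
  then have "walk_of_length W F k (f u) (f v) \<or> walk_of_length W F (Suc k) (f u) (f v)"
    using k by (auto simp: walk_of_length_Suc_iff)
  then show ?case using \<open>k \<le> n\<close> le_SucI Suc_le_mono by blast
qed

lemma reachable_surj_weak_graph_hom:
  "surj_weak_graph_hom V E W F f \<Longrightarrow> reachable V E u v \<Longrightarrow> reachable W F (f u) (f v)"
  unfolding reachable_def by (meson walk_of_length_surj_weak_graph_hom)

lemma graph_dist_surj_weak_graph_hom_le:
  assumes f: "surj_weak_graph_hom V E W F f" and "reachable V E u v"
  shows "graph_dist W F (f u) (f v) \<le> graph_dist V E u v"
proof -
  have "walk_of_length V E (graph_dist V E u v) u v"
    using assms(2) unfolding reachable_def graph_dist_def by (rule LeastI_ex)
  then obtain k where "k \<le> graph_dist V E u v" and "walk_of_length W F k (f u) (f v)"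
    using walk_of_length_surj_weak_graph_hom[OF f] by blast
  then show ?thesis unfolding graph_dist_def by (meson Least_le order_trans)
qed

lemma graph_connected_surj_weak_graph_hom:
  assumes f: "surj_weak_graph_hom V E W F f" and conn: "graph_connected V E"
  shows "graph_connected W F"
  unfolding graph_connected_def
proof (intro ballI)
  fix x y assume "x \<in> W" "y \<in> W"
  then obtain u v where "u \<in> V" "v \<in> V" "x = f u" "y = f v"
    using f unfolding surj_weak_graph_hom_def by blast
  moreover have "reachable V E u v"
    using conn \<open>u \<in> V\<close> \<open>v \<in> V\<close> unfolding graph_connected_def by blast
  ultimately show "reachable W F x y"
    using reachable_surj_weak_graph_hom[OF f] by simp
qed

lemma finite_graph_dists:
  assumes "finite V"
  shows "finite {graph_dist V E u v | u v. u \<in> V \<and> v \<in> V}"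
proof -
  have "{graph_dist V E u v | u v. u \<in> V \<and> v \<in> V} = (\<lambda>(u, v). graph_dist V E u v) ` (V \<times> V)"
    by auto
  with assms show ?thesis by simp
qed

lemma graph_dist_le_graph_diameter:
  "u \<in> V \<Longrightarrow> v \<in> V \<Longrightarrow> finite V \<Longrightarrow> graph_dist V E u v \<le> graph_diameter V E"
  unfolding graph_diameter_def by (intro Max_ge finite_graph_dists) auto

lemma graph_diameter_le_iff:
  "finite V \<Longrightarrow> V \<noteq> {} \<Longrightarrow> graph_diameter V E \<le> n \<longleftrightarrow> (\<forall>u \<in> V. \<forall>v \<in> V. graph_dist V E u v \<le> n)"
  unfolding graph_diameter_def by (subst Max_le_iff) (auto intro: finite_graph_dists)

lemma graph_diameter_surj_weak_graph_hom_le: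
  assumes f: "surj_weak_graph_hom V E W F f" and "finite V" and conn: "graph_connected V E"
  shows "graph_diameter W F \<le> graph_diameter V E"
proof (cases "V = {}")
  case True
  \<comment> \<open>both diameters are then the junk value \<open>Max {}\<close>\<close>
  then show ?thesis using f by (simp add: surj_weak_graph_hom_def graph_diameter_def)
next
  case False
  have W: "W = f ` V" using f by (simp add: surj_weak_graph_hom_def)
  have "graph_dist W F (f u) (f v) \<le> graph_diameter V E" if "u \<in> V" "v \<in> V" for u v
  proof -
    have "graph_dist W F (f u) (f v) \<le> graph_dist V E u v"
      using that conn f by (simp add: graph_connected_def graph_dist_surj_weak_graph_hom_le)
    also have "\<dots> \<le> graph_diameter V E"
      using that \<open>finite V\<close> by (rule graph_dist_le_graph_diameter)
    finally show ?thesis .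
  qed
  then show ?thesis
    using \<open>finite V\<close> False by (simp add: W graph_diameter_le_iff)
qed

lemma connected_components_eq_image:
  "connected_components V E = (\<lambda>u. {v. reachable V E u v}) ` V"
  unfolding connected_components_def quotient_def using reachable_in_vertices by fastforce

lemma num_components_surj_weak_graph_hom_le:
  assumes f: "surj_weak_graph_hom V E W F f" and "finite V"
  shows "num_components W F \<le> num_components V E"
proof -
  define component_of_image where
    "component_of_image C = {x. \<exists>v \<in> C. reachable W F (f v) x}" for C
  have "component_of_image {v. reachable V E u v} = {x. reachable W F (f u) x}" if "u \<in> V" for u
  proof (intro equalityI subsetI)
    fix x assume "x \<in> component_of_image {v. reachable V E u v}"
    then obtain v where uv: "reachable V E u v" and vx: "reachable W F (f v) x"
      unfolding component_of_image_def by blast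
    from uv have "reachable W F (f u) (f v)"
      by (rule reachable_surj_weak_graph_hom[OF f])
    with vx show "x \<in> {x. reachable W F (f u) x}"
      using reachable_trans by fastforce
  next
    fix x assume "x \<in> {x. reachable W F (f u) x}"
    then show "x \<in> component_of_image {v. reachable V E u v}"
      unfolding component_of_image_def using reachable_refl[OF that] by blast
  qed
  moreover have "W = f ` V"
    using f by (simp add: surj_weak_graph_hom_def)
  ultimately have "connected_components W F = component_of_image ` connected_components V E"
    by (simp add: connected_components_eq_image image_image cong: image_cong)
  then show ?thesis
    unfolding num_components_def
    using \<open>finite V\<close> by (simp add: connected_components_eq_image card_image_le)
qed

lemma (in group_action) orbit_subset: "x \<in> E \<Longrightarrow> orbit G \<phi> x \<subseteq> E"
  unfolding orbit_def using element_image by blast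

lemma (in group_action) orbit_eq_if_mem:
  assumes x: "x \<in> E" and y: "y \<in> orbit G \<phi> x"
  shows "orbit G \<phi> y = orbit G \<phi> x"
proof -
  have yE: "y \<in> E" using orbit_subset[OF x] y by blast
  have xy: "x \<in> orbit G \<phi> y" using orbit_sym[OF x yE y] .
  show ?thesis
  proof (intro equalityI subsetI)
    fix z assume z: "z \<in> orbit G \<phi> y"
    with orbit_subset[OF yE] have "z \<in> E" by blast
    from orbit_trans[OF x yE this y z] show "z \<in> orbit G \<phi> x" .
  next
    fix z assume z: "z \<in> orbit G \<phi> x"
    with orbit_subset[OF x] have "z \<in> E" by blast
    from orbit_trans[OF yE x this xy z] show "z \<in> orbit G \<phi> y" .
  qed
qed

lemma orbit_subgroup_subset:
  "H \<subseteq> carrier G \<Longrightarrow> orbit (G\<lparr>carrier := H\<rparr>) \<phi> x \<subseteq> orbit G \<phi> x"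
  unfolding orbit_def by auto

lemma (in group_action) orbit_subgroup_refl:
  assumes "subgroup H G" and "x \<in> E"
  shows "x \<in> orbit (G\<lparr>carrier := H\<rparr>) \<phi> x"
proof -
  have "\<phi> \<one> x = x" using id_eq_one assms(2) by (metis restrict_apply')
  then show ?thesis using subgroup.one_closed[OF assms(1)] unfolding orbit_def by force
qed

lemma (in group_action) orbit_some_mem_orbit_subgroup:
  assumes "subgroup H G" and "x \<in> E"
  shows "orbit G \<phi> (SOME y. y \<in> orbit (G\<lparr>carrier := H\<rparr>) \<phi> x) = orbit G \<phi> x"
proof -
  have "(SOME y. y \<in> orbit (G\<lparr>carrier := H\<rparr>) \<phi> x) \<in> orbit (G\<lparr>carrier := H\<rparr>) \<phi> x"
    using orbit_subgroup_refl[OF assms] by (rule someI)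
  then have "(SOME y. y \<in> orbit (G\<lparr>carrier := H\<rparr>) \<phi> x) \<in> orbit G \<phi> x"
    using orbit_subgroup_subset[OF subgroup.subset[OF assms(1)]] by (rule subsetD[rotated])
  then show ?thesis
    by (rule orbit_eq_if_mem[OF assms(2)])
qed

lemma orbit_graph_surj_weak_graph_hom:
  assumes "group_action A (carrier G) \<phi>" and "subgroup B A"
  shows "surj_weak_graph_hom (orbit_graph_vertices (A\<lparr>carrier := B\<rparr>) G \<phi>) (orbit_graph_adj G)
           (orbit_graph_vertices A G \<phi>) (orbit_graph_adj G) (\<lambda>P. orbit A \<phi> (SOME x. x \<in> P))"
    (is "surj_weak_graph_hom ?VB ?E ?VA ?E ?f")
proof -
  interpret group_action A "carrier G" \<phi> by fact
  have enclosing: "?f (orbit (A\<lparr>carrier := B\<rparr>) \<phi> x) = orbit A \<phi> x" if "x \<in> carrier G" for x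
    using orbit_some_mem_orbit_subgroup[OF assms(2) that] .
  have image: "?f ` ?VB = ?VA"
    unfolding orbit_graph_vertices_def Setcompr_eq_image image_image
    using enclosing by (intro image_cong) auto
  have within_enclosing: "P \<subseteq> ?f P" if P: "P \<in> ?VB" for P
  proof -
    obtain x where "x \<in> carrier G" and "P = orbit (A\<lparr>carrier := B\<rparr>) \<phi> x"
      using P unfolding orbit_graph_vertices_def by blast
    then show ?thesis
      using enclosing orbit_subgroup_subset[OF subgroup.subset[OF assms(2)]] by simp
  qed
  have "?f P = ?f Q \<or> ?E (?f P) (?f Q)" if "P \<in> ?VB" "Q \<in> ?VB" "?E P Q" for P Q
  proof -
    obtain x y where "x \<in> P" "y \<in> Q" "x \<otimes>\<^bsub>G\<^esub> y = y \<otimes>\<^bsub>G\<^esub> x"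
      using \<open>?E P Q\<close> unfolding orbit_graph_adj_def by blast
    moreover have "x \<in> ?f P" "y \<in> ?f Q"
      using within_enclosing that \<open>x \<in> P\<close> \<open>y \<in> Q\<close> by blast+
    ultimately show ?thesis
      unfolding orbit_graph_adj_def by blast
  qed
  with image show ?thesis
    unfolding surj_weak_graph_hom_def by blast
qed

lemma finite_orbit_graph_vertices:
  "finite (carrier G) \<Longrightarrow> finite (orbit_graph_vertices A G \<phi>)"
  unfolding orbit_graph_vertices_def by simp

theorem lemma2p1:
  fixes G :: "('a, 'd) monoid_scheme" and A :: "('b, 'c) monoid_scheme"
    and \<phi> :: "'b \<Rightarrow> 'a \<Rightarrow> 'a" and B :: "'b set" and d m :: nat
  assumes "acts_by_automorphisms A G \<phi>"
    and "finite (carrier G)" and "finite (carrier A)"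
    and "subgroup B A"
  shows "(graph_connected (orbit_graph_vertices (A\<lparr>carrier := B\<rparr>) G \<phi>) (orbit_graph_adj G)
           \<and> graph_diameter (orbit_graph_vertices (A\<lparr>carrier := B\<rparr>) G \<phi>) (orbit_graph_adj G) = d
         \<longrightarrow> graph_connected (orbit_graph_vertices A G \<phi>) (orbit_graph_adj G)
           \<and> graph_diameter (orbit_graph_vertices A G \<phi>) (orbit_graph_adj G) \<le> d)
       \<and> (num_components (orbit_graph_vertices (A\<lparr>carrier := B\<rparr>) G \<phi>) (orbit_graph_adj G) = m
         \<longrightarrow> num_components (orbit_graph_vertices A G \<phi>) (orbit_graph_adj G) \<le> m)"
proof -
  let ?VA = "orbit_graph_vertices A G \<phi>" and ?VB = "orbit_graph_vertices (A\<lparr>carrier := B\<rparr>) G \<phi>"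
    and ?E = "orbit_graph_adj G"
  have "group_action A (carrier G) \<phi>"
    using assms(1) unfolding acts_by_automorphisms_def by blast
  then have hom: "surj_weak_graph_hom ?VB ?E ?VA ?E (\<lambda>P. orbit A \<phi> (SOME x. x \<in> P))"
    using assms(4) by (rule orbit_graph_surj_weak_graph_hom)
  have fin: "finite ?VB"
    using assms(2) by (rule finite_orbit_graph_vertices)
  show ?thesis
  proof (intro conjI impI)
    assume "graph_connected ?VB ?E \<and> graph_diameter ?VB ?E = d"
    then show "graph_connected ?VA ?E" and "graph_diameter ?VA ?E \<le> d"
      using graph_connected_surj_weak_graph_hom[OF hom] graph_diameter_surj_weak_graph_hom_le[OF hom fin]
      by simp_all
  next
    assume "num_components ?VB ?E = m"
    then show "num_components ?VA ?E \<le> m"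
      using num_components_surj_weak_graph_hom_le[OF hom fin] by simp
  qed
qed

end
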